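(* Let $(E_n)_{n\in\mathbb Z}$ be the integer sequence with $E_0=0$, $E_1=E_2=1$ and $E_n+E_{n+2}=E_{n+3}$ for all $n\in\mathbb Z$. For integers $n,i,j$ let $$\Delta_{n,n+i,n+i+j}=\det\begin{pmatrix}E_n & E_{n-1} & E_{n+1}\\ E_{n+i} & E_{n+i-1} & E_{n+i+1}\\ E_{n+i+j} & E_{n+i+j-1} & E_{n+i+j+1}\end{pmatrix}.$$ Then $\Delta_{n,n+i,n+i+j}$ does not depend on $n$, and for all $n,i,j\in\mathbb Z$, $$\Delta_{n,n+i,n+i+j}=E_iE_{i+j-1}-E_{i+j}E_{i-1}.$$ *)

theory Defs
  imports "HOL-Analysis.Analysis"
begin

definition Delta :: "(int \<Rightarrow> int) \<Rightarrow> int \<Rightarrow> int \<Rightarrow> int \<Rightarrow> int" where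
  "Delta E a b c = det (vector [vector [E a, E (a - 1), E (a + 1)],
                                vector [E b, E (b - 1), E (b + 1)],
                                vector [E c, E (c - 1), E (c + 1)]] :: int^3^3)"

end

theory Submission
  imports Defs
begin

text \<open>Because \<open>E (n + 2) = E (n - 1) + E (n + 1)\<close>, shifting all three indices by one
  multiplies each row \<open>(E n, E (n - 1), E (n + 1))\<close> by a fixed integer matrix of determinant 1,
  so \<open>Delta\<close> is invariant under simultaneous shifts of its indices. At the shift that puts the
  first index at 0 the first row is \<open>(0, 0, 1)\<close>, and the determinant collapses to a 2x2 minor.\<close>

lemma Delta_expand:
  "Delta E a b c =
     E a * E (b - 1) * E (c + 1) - E a * E (b + 1) * E (c - 1)
   - E (a - 1) * E b * E (c + 1) + E (a - 1) * E (b + 1) * E c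
   + E (a + 1) * E b * E (c - 1) - E (a + 1) * E (b - 1) * E c"
  unfolding Delta_def det_3 by (simp add: vector_3 algebra_simps)

lemma Delta_shift_one:
  assumes rec: "\<And>n. E n + E (n + 2) = E (n + 3)"
  shows "Delta E (a + 1) (b + 1) (c + 1) = Delta E a b c"
proof -
  have next_step: "E (k + 2) = E (k - 1) + E (k + 1)" for k
    using rec[of "k - 1"] by (simp add: add.commute)
  show ?thesis
    unfolding Delta_expand
    using next_step[of a] next_step[of b] next_step[of c] by (simp add: algebra_simps)
qed

lemma Delta_shift:
  assumes rec: "\<And>n. E n + E (n + 2) = E (n + 3)"
  shows "Delta E (a + k) (b + k) (c + k) = Delta E a b c"
proof (induction k rule: int_induct[where k = 0])
  case base
  then show ?case by simp
next
  case (step1 i)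
  then show ?case
    using Delta_shift_one[OF rec, of "a + i" "b + i" "c + i"] by (simp add: algebra_simps)
next
  case (step2 i)
  then show ?case
    using Delta_shift_one[OF rec, of "a + (i - 1)" "b + (i - 1)" "c + (i - 1)"]
    by (simp add: algebra_simps)
qed

lemma Delta_at_zero:
  assumes "E (-1) = 0" and "E 0 = 0" and "E 1 = 1"
  shows "Delta E 0 b c = E b * E (c - 1) - E c * E (b - 1)"
  unfolding Delta_expand using assms by (simp add: algebra_simps)

theorem theorem15:
  fixes E :: "int \<Rightarrow> int"
  assumes "E 0 = 0" and "E 1 = 1" and "E 2 = 1"
    and "\<And>n. E n + E (n + 2) = E (n + 3)"
  shows "(\<forall>i j n m. Delta E n (n + i) (n + i + j) = Delta E m (m + i) (m + i + j))
    \<and> (\<forall>n i j. Delta E n (n + i) (n + i + j) = E i * E (i + j - 1) - E (i + j) * E (i - 1))"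
proof -
  have to_zero: "Delta E n (n + i) (n + i + j) = Delta E 0 i (i + j)" for n i j
    using Delta_shift[OF assms(4), of 0 n i "i + j"] by (simp add: algebra_simps)
  have "E (-1) = 0"
    using assms(4)[of "-1"] assms(2,3) by simp
  then have "Delta E 0 i (i + j) = E i * E (i + j - 1) - E (i + j) * E (i - 1)" for i j
    using Delta_at_zero assms(1,2) by blast
  with to_zero show ?thesis by metis
qed

end
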